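(* Let $Q$ be an open bounded subset of $\mathbb{R}^N$ for some $N\ge1$ and $p\in[1,\infty)$. Let $(z_k)_{k\ge1}$ be a sequence of non-negative functions in $L_p(Q)$ and assume that there is a sequence $(Z_j)_{j\ge1}$ in $L_p(Q)$ such that $$\lim_{k\to\infty}\Big\|\Big(z_k-\frac1j\Big)_+-Z_j\Big\|_{L_p(Q)}=0\quad\text{for all }j\ge1.$$ Then $(z_k)$ converges in $L_p(Q)$ as $k\to\infty$.
   Context: $z_+:=\max\{z,0\}$. *)

theory Defs
  imports "HOL-Analysis.Analysis"
begin

text \<open>L_p(Q) (real-valued, Lebesgue measure restricted to Q), represented by functions.\<close>
definition Lp_space :: "real \<Rightarrow> 'a::euclidean_space set \<Rightarrow> ('a \<Rightarrow> real) set" where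
  "Lp_space p Q = {f. f \<in> borel_measurable (lebesgue_on Q) \<and>
                      integrable (lebesgue_on Q) (\<lambda>x. \<bar>f x\<bar> powr p)}"

definition Lp_norm :: "real \<Rightarrow> 'a::euclidean_space set \<Rightarrow> ('a \<Rightarrow> real) \<Rightarrow> real" where
  "Lp_norm p Q f = (\<integral>x. \<bar>f x\<bar> powr p \<partial>(lebesgue_on Q)) powr (1 / p)"

definition pos_part :: "real \<Rightarrow> real" where
  "pos_part z = max z 0"

end

theory Submission
  imports Defs
begin

text \<open>
  For non-negative \<open>z\<^sub>k\<close> the truncation \<open>(z\<^sub>k - 1/j)\<^sub>+\<close> is uniformly within \<open>1/j\<close> of \<open>z\<^sub>k\<close>,
  and truncations at levels \<open>1/i\<close> and \<open>1/j\<close> differ by at most \<open>|1/i - 1/j|\<close> everywhere.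
  Such a uniform bound survives passage to \<open>L\<^sub>p\<close>-limits, so the limits \<open>Z\<^sub>j\<close> form a uniformly
  Cauchy sequence a.e.; its pointwise limit \<open>w\<close> lies within \<open>1/j\<close> of \<open>Z\<^sub>j\<close>. On the finite measure
  space \<open>Q\<close> this gives \<open>\<parallel>z\<^sub>k - w\<parallel>\<^sub>p \<lesssim> \<parallel>(z\<^sub>k - 1/j)\<^sub>+ - Z\<^sub>j\<parallel>\<^sub>p + |Q|\<^sup>1\<^sup>/\<^sup>p/j\<close>, which is small
  for large \<open>j\<close> and then large \<open>k\<close>.
\<close>

lemma abs_pos_part_diff_le: "\<bar>pos_part (t - a) - pos_part (t - b)\<bar> \<le> \<bar>a - b\<bar>"
  by (simp add: pos_part_def max_def abs_minus_commute)

lemma abs_sub_pos_part_le: "0 \<le> t \<Longrightarrow> 0 \<le> a \<Longrightarrow> \<bar>t - pos_part (t - a)\<bar> \<le> a"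
  by (simp add: pos_part_def max_def)

lemma dist_lim_le_if_dist_le_dist:
  fixes a :: "nat \<Rightarrow> 'a::complete_space" and e :: "nat \<Rightarrow> 'b::metric_space"
  assumes e: "e \<longlonglongrightarrow> l" and dist_le: "\<And>i j. dist (a i) (a j) \<le> dist (e i) (e j)"
  shows "dist (a j) (lim a) \<le> dist (e j) l"
proof -
  have "Cauchy e" using e by (rule LIMSEQ_imp_Cauchy)
  then have "Cauchy a"
    by (metis (no_types, lifting) metric_CauchyD metric_CauchyI dist_le le_less_trans)
  then have a_lim: "a \<longlonglongrightarrow> lim a"
    by (simp add: Cauchy_convergent_iff convergent_LIMSEQ_iff)
  show "dist (a j) (lim a) \<le> dist (e j) l"
    by (rule tendsto_le[OF trivial_limit_sequentially tendsto_dist[OF tendsto_const e]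
          tendsto_dist[OF tendsto_const a_lim]])
       (use dist_le in auto)
qed

lemma tendsto_zero_by_approximation:
  fixes x b :: "nat \<Rightarrow> real" and a :: "nat \<Rightarrow> nat \<Rightarrow> real"
  assumes x: "\<And>k. 0 \<le> x k" and b: "b \<longlonglongrightarrow> 0" and a: "\<And>j. (\<lambda>k. a j k) \<longlonglongrightarrow> 0"
    and bound: "\<And>j k. x k \<le> a j k + b j"
  shows "x \<longlonglongrightarrow> 0"
proof (rule LIMSEQ_I)
  fix r :: real
  assume r: "0 < r"
  obtain j where "b j < r / 2"
    using r order_tendstoD(2)[OF b, of "r / 2"] by (auto simp: eventually_sequentially)
  moreover obtain K where "\<And>k. K \<le> k \<Longrightarrow> a j k < r / 2"
    using r order_tendstoD(2)[OF a[of j], of "r / 2"] by (auto simp: eventually_sequentially)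
  ultimately show "\<exists>K. \<forall>k\<ge>K. norm (x k - 0) < r"
    using x bound by (metis add_strict_mono field_sum_of_halves order_le_less_trans real_norm_def
        abs_of_nonneg diff_zero)
qed

definition Lp_integral :: "real \<Rightarrow> 'a::euclidean_space set \<Rightarrow> ('a \<Rightarrow> real) \<Rightarrow> real" where
  "Lp_integral p Q f = (\<integral>x. \<bar>f x\<bar> powr p \<partial>lebesgue_on Q)"

lemma Lp_integral_nonneg: "0 \<le> Lp_integral p Q f"
  unfolding Lp_integral_def by (intro integral_nonneg_AE) auto

lemma Lp_norm_eq_Lp_integral_powr: "Lp_norm p Q f = Lp_integral p Q f powr (1 / p)"
  by (simp add: Lp_norm_def Lp_integral_def)

lemma Lp_norm_tendsto_0_iff:
  assumes "0 < p"
  shows "(\<lambda>k. Lp_norm p Q (f k)) \<longlonglongrightarrow> 0 \<longleftrightarrow> (\<lambda>k. Lp_integral p Q (f k)) \<longlonglongrightarrow> 0"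
proof
  assume "(\<lambda>k. Lp_norm p Q (f k)) \<longlonglongrightarrow> 0"
  then have "(\<lambda>k. Lp_norm p Q (f k) powr p) \<longlonglongrightarrow> 0"
    using assms by (intro tendsto_zero_powrI[OF _ tendsto_const]) (auto simp: Lp_norm_eq_Lp_integral_powr)
  moreover have "Lp_norm p Q (f k) powr p = Lp_integral p Q (f k)" for k
    using assms Lp_integral_nonneg[of p Q "f k"] by (simp add: Lp_norm_eq_Lp_integral_powr powr_powr)
  ultimately show "(\<lambda>k. Lp_integral p Q (f k)) \<longlonglongrightarrow> 0" by simp
next
  assume "(\<lambda>k. Lp_integral p Q (f k)) \<longlonglongrightarrow> 0"
  then show "(\<lambda>k. Lp_norm p Q (f k)) \<longlonglongrightarrow> 0"
    using assms unfolding Lp_norm_eq_Lp_integral_powr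
    by (intro tendsto_zero_powrI[OF _ tendsto_const]) (auto simp: Lp_integral_nonneg)
qed

lemma abs_add_powr_le:
  fixes a b :: real
  assumes "0 \<le> p"
  shows "\<bar>a + b\<bar> powr p \<le> 2 powr p * (\<bar>a\<bar> powr p + \<bar>b\<bar> powr p)"
proof -
  have "\<bar>a + b\<bar> powr p \<le> (2 * max \<bar>a\<bar> \<bar>b\<bar>) powr p"
    using assms by (intro powr_mono2) auto
  also have "\<dots> = 2 powr p * max \<bar>a\<bar> \<bar>b\<bar> powr p"
    by (simp add: powr_mult)
  also have "\<dots> \<le> 2 powr p * (\<bar>a\<bar> powr p + \<bar>b\<bar> powr p)"
    by (intro mult_left_mono) (auto simp: max_def)
  finally show ?thesis .
qed

lemma Lp_dominated:
  assumes p: "0 \<le> p" and f: "f \<in> Lp_space p Q" and g: "g \<in> Lp_space p Q"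
    and h: "h \<in> borel_measurable (lebesgue_on Q)"
    and dom: "AE x in lebesgue_on Q. \<bar>h x\<bar> \<le> \<bar>f x\<bar> + \<bar>g x\<bar>"
  shows "h \<in> Lp_space p Q"
    and "Lp_integral p Q h \<le> 2 powr p * (Lp_integral p Q f + Lp_integral p Q g)"
proof -
  let ?M = "lebesgue_on Q"
  let ?bound = "\<lambda>x. 2 powr p * (\<bar>f x\<bar> powr p + \<bar>g x\<bar> powr p)"
  have fi: "integrable ?M (\<lambda>x. \<bar>f x\<bar> powr p)" and gi: "integrable ?M (\<lambda>x. \<bar>g x\<bar> powr p)"
    using f g by (auto simp: Lp_space_def)
  then have bound_int: "integrable ?M ?bound" by auto
  have pointwise: "AE x in ?M. \<bar>h x\<bar> powr p \<le> ?bound x"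
    using dom
  proof eventually_elim
    case (elim x)
    have "\<bar>h x\<bar> powr p \<le> (\<bar>f x\<bar> + \<bar>g x\<bar>) powr p" using elim p by (intro powr_mono2) auto
    also have "\<dots> \<le> ?bound x" using abs_add_powr_le[OF p, of "\<bar>f x\<bar>" "\<bar>g x\<bar>"] by simp
    finally show ?case .
  qed
  have hi: "integrable ?M (\<lambda>x. \<bar>h x\<bar> powr p)"
    by (rule Bochner_Integration.integrable_bound[OF bound_int])
       (use h pointwise in \<open>auto elim!: eventually_mono\<close>)
  then show "h \<in> Lp_space p Q" using h by (simp add: Lp_space_def)
  have "Lp_integral p Q h \<le> integral\<^sup>L ?M ?bound"
    unfolding Lp_integral_def by (rule integral_mono_AE[OF hi bound_int pointwise])
  also have "\<dots> = 2 powr p * (Lp_integral p Q f + Lp_integral p Q g)"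
    using fi gi by (simp add: Lp_integral_def)
  finally show "Lp_integral p Q h \<le> 2 powr p * (Lp_integral p Q f + Lp_integral p Q g)" .
qed

lemma Lp_space_measurable: "f \<in> Lp_space p Q \<Longrightarrow> f \<in> borel_measurable (lebesgue_on Q)"
  by (simp add: Lp_space_def)

lemma Lp_space_diff:
  assumes "0 \<le> p" "f \<in> Lp_space p Q" "g \<in> Lp_space p Q"
  shows "(\<lambda>x. f x - g x) \<in> Lp_space p Q"
  using assms by (intro Lp_dominated(1)[OF assms] borel_measurable_diff Lp_space_measurable) auto

lemma Lp_space_abs: "f \<in> Lp_space p Q \<Longrightarrow> (\<lambda>x. \<bar>f x\<bar>) \<in> Lp_space p Q"
  by (simp add: Lp_space_def borel_measurable_abs)

lemma Lp_space_pos_part: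
  assumes "0 \<le> p" "f \<in> Lp_space p Q"
  shows "(\<lambda>x. pos_part (f x)) \<in> Lp_space p Q"
  using assms by (intro Lp_dominated(1)[OF assms(1,2,2)])
    (auto simp: pos_part_def dest: Lp_space_measurable)

lemma
  assumes "finite_measure (lebesgue_on Q)"
  shows Lp_space_const: "(\<lambda>x. c) \<in> Lp_space p Q"
    and Lp_integral_const: "Lp_integral p Q (\<lambda>x. c) = measure (lebesgue_on Q) Q * \<bar>c\<bar> powr p"
  using finite_measure.integrable_const[OF assms]
  by (auto simp: Lp_space_def Lp_integral_def)

lemma AE_zero_if_Lp_integral_zero:
  assumes "f \<in> Lp_space p Q" "Lp_integral p Q f = 0"
  shows "AE x in lebesgue_on Q. f x = 0"
proof -
  have "AE x in lebesgue_on Q. \<bar>f x\<bar> powr p = 0"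
    using assms integral_nonneg_eq_0_iff_AE[of "lebesgue_on Q" "\<lambda>x. \<bar>f x\<bar> powr p"]
    by (auto simp: Lp_space_def Lp_integral_def)
  then show ?thesis by (auto elim!: eventually_mono)
qed

text \<open>A uniform bound \<open>|f\<^sub>k - g\<^sub>k| \<le> c\<close> passes to the \<open>L\<^sub>p\<close>-limits, because the excess
  \<open>(|f - g| - c)\<^sub>+\<close> is dominated by \<open>|f - f\<^sub>k| + |g\<^sub>k - g|\<close>.\<close>
lemma AE_abs_diff_le_if_Lp_limits:
  assumes fm: "finite_measure (lebesgue_on Q)" and p: "0 \<le> p"
    and f: "\<And>k. f' k \<in> Lp_space p Q" "f \<in> Lp_space p Q"
    and g: "\<And>k. g' k \<in> Lp_space p Q" "g \<in> Lp_space p Q"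
    and f_lim: "(\<lambda>k. Lp_integral p Q (\<lambda>x. f' k x - f x)) \<longlonglongrightarrow> 0"
    and g_lim: "(\<lambda>k. Lp_integral p Q (\<lambda>x. g' k x - g x)) \<longlonglongrightarrow> 0"
    and bound: "\<And>k x. \<bar>f' k x - g' k x\<bar> \<le> c"
  shows "AE x in lebesgue_on Q. \<bar>f x - g x\<bar> \<le> c"
proof -
  define h where "h x = pos_part (\<bar>f x - g x\<bar> - c)" for x
  have h_Lp: "h \<in> Lp_space p Q"
    unfolding h_def[abs_def] using Lp_space_const[OF fm]
    by (intro Lp_space_pos_part Lp_space_diff Lp_space_abs p f g)
  let ?err = "\<lambda>k. 2 powr p * (Lp_integral p Q (\<lambda>x. f' k x - f x) + Lp_integral p Q (\<lambda>x. g' k x - g x))"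
  have h_bound: "Lp_integral p Q h \<le> ?err k" for k
  proof (rule Lp_dominated(2))
    show "AE x in lebesgue_on Q. \<bar>h x\<bar> \<le> \<bar>f' k x - f x\<bar> + \<bar>g' k x - g x\<bar>"
    proof (rule AE_I2)
      fix x
      show "\<bar>h x\<bar> \<le> \<bar>f' k x - f x\<bar> + \<bar>g' k x - g x\<bar>"
        using bound[of k x] unfolding h_def pos_part_def by (simp add: abs_if split: if_splits)
    qed
  qed (use p f g h_Lp in \<open>auto intro: Lp_space_diff Lp_space_measurable\<close>)
  have err_lim: "?err \<longlonglongrightarrow> 0"
    using tendsto_mult_right_zero[OF tendsto_add_zero[OF f_lim g_lim]] .
  have "Lp_integral p Q h \<le> 0"
    by (rule tendsto_le[OF trivial_limit_sequentially err_lim tendsto_const])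
       (use h_bound in auto)
  then have "Lp_integral p Q h = 0" using Lp_integral_nonneg[of p Q h] by linarith
  then show ?thesis
    using AE_zero_if_Lp_integral_zero[OF h_Lp]
    by (auto simp: h_def pos_part_def max_def split: if_splits elim!: eventually_mono)
qed

lemma Lp_space_uniform_limit:
  fixes Z :: "nat \<Rightarrow> 'a::euclidean_space \<Rightarrow> real" and e :: "nat \<Rightarrow> real"
  assumes fm: "finite_measure (lebesgue_on Q)" and p: "0 \<le> p"
    and Z: "\<And>n. Z n \<in> Lp_space p Q" and e: "e \<longlonglongrightarrow> 0"
    and close: "\<And>i j. AE x in lebesgue_on Q. \<bar>Z i x - Z j x\<bar> \<le> \<bar>e i - e j\<bar>"
  obtains w where "w \<in> Lp_space p Q" "\<And>n. AE x in lebesgue_on Q. \<bar>Z n x - w x\<bar> \<le> \<bar>e n\<bar>"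
proof
  define w where "w x = lim (\<lambda>n. Z n x)" for x
  have "AE x in lebesgue_on Q. \<forall>i j. \<bar>Z i x - Z j x\<bar> \<le> \<bar>e i - e j\<bar>"
    using close by (simp add: AE_all_countable)
  then show w_close: "AE x in lebesgue_on Q. \<bar>Z n x - w x\<bar> \<le> \<bar>e n\<bar>" for n
  proof eventually_elim
    case (elim x)
    then show ?case
      using dist_lim_le_if_dist_le_dist[OF e, of "\<lambda>n. Z n x"] by (simp add: w_def dist_real_def)
  qed
  have [measurable]: "Z n \<in> borel_measurable (lebesgue_on Q)" for n
    using Z by (rule Lp_space_measurable)
  have "w \<in> borel_measurable (lebesgue_on Q)"
    unfolding w_def[abs_def] by measurable
  then show "w \<in> Lp_space p Q"
    by (rule Lp_dominated(1)[OF p Z[of 0] Lp_space_const[OF fm, of "e 0"]])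
       (use w_close[of 0] in \<open>auto elim!: eventually_mono\<close>)
qed

lemma uniform_limit_of_truncation_limits:
  assumes fm: "finite_measure (lebesgue_on Q)" and p: "0 \<le> p"
    and z: "\<And>k. z k \<in> Lp_space p Q" and Z: "\<And>j. Z j \<in> Lp_space p Q" and e: "e \<longlonglongrightarrow> 0"
    and lim: "\<And>j. (\<lambda>k. Lp_integral p Q (\<lambda>x. pos_part (z k x - e j) - Z j x)) \<longlonglongrightarrow> 0"
  obtains w where "w \<in> Lp_space p Q" "\<And>j. AE x in lebesgue_on Q. \<bar>Z j x - w x\<bar> \<le> \<bar>e j\<bar>"
proof -
  have truncation_Lp: "(\<lambda>x. pos_part (z k x - e j)) \<in> Lp_space p Q" for k j
    using Lp_space_const[OF fm] by (intro Lp_space_pos_part Lp_space_diff p z)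
  have "AE x in lebesgue_on Q. \<bar>Z i x - Z j x\<bar> \<le> \<bar>e i - e j\<bar>" for i j
    by (rule AE_abs_diff_le_if_Lp_limits[OF fm p truncation_Lp Z truncation_Lp Z lim lim])
       (simp add: abs_pos_part_diff_le)
  then show thesis by (rule Lp_space_uniform_limit[OF fm p Z e _ that])
qed

lemma Lp_integral_tendsto_0_if_approximable:
  assumes fm: "finite_measure (lebesgue_on Q)" and p: "0 < p"
    and d: "\<And>k. d k \<in> borel_measurable (lebesgue_on Q)"
    and u: "\<And>j k. u j k \<in> Lp_space p Q" and u_lim: "\<And>j. (\<lambda>k. Lp_integral p Q (u j k)) \<longlonglongrightarrow> 0"
    and close: "\<And>j k. AE x in lebesgue_on Q. \<bar>d k x\<bar> \<le> \<bar>u j k x\<bar> + e j"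
    and e: "e \<longlonglongrightarrow> 0"
  shows "(\<lambda>k. Lp_integral p Q (d k)) \<longlonglongrightarrow> 0"
proof -
  define m where "m = measure (lebesgue_on Q) Q"
  have bound: "Lp_integral p Q (d k) \<le> 2 powr p * Lp_integral p Q (u j k) + 2 powr p * (m * \<bar>e j\<bar> powr p)"
    for j k
  proof -
    have "Lp_integral p Q (d k) \<le> 2 powr p * (Lp_integral p Q (u j k) + Lp_integral p Q (\<lambda>x. e j))"
      by (rule Lp_dominated(2)[OF _ u Lp_space_const[OF fm] d])
         (use p close[where j = j and k = k] in \<open>auto elim!: eventually_mono\<close>)
    then show ?thesis by (simp add: Lp_integral_const[OF fm] m_def distrib_left)
  qed
  have "(\<lambda>j. \<bar>e j\<bar> powr p) \<longlonglongrightarrow> 0"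
    by (rule tendsto_zero_powrI[OF tendsto_rabs_zero[OF e] tendsto_const]) (use p in auto)
  then have error_lim: "(\<lambda>j. 2 powr p * (m * \<bar>e j\<bar> powr p)) \<longlonglongrightarrow> 0"
    by (intro tendsto_mult_right_zero)
  have approx_lim: "(\<lambda>k. 2 powr p * Lp_integral p Q (u j k)) \<longlonglongrightarrow> 0" for j
    using tendsto_mult_right_zero[OF u_lim] .
  show ?thesis
    by (rule tendsto_zero_by_approximation[OF Lp_integral_nonneg error_lim approx_lim bound])
qed

theorem lemma3p5:
  fixes Q :: "'a::euclidean_space set" and p :: real
    and z :: "nat \<Rightarrow> 'a \<Rightarrow> real" and Z :: "nat \<Rightarrow> 'a \<Rightarrow> real"
  assumes "open Q" and "bounded Q" and "1 \<le> p"
    and "\<forall>k. z k \<in> Lp_space p Q"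
    and "\<forall>k. AE x in lebesgue_on Q. z k x \<ge> 0"
    and "\<forall>j\<ge>1. Z j \<in> Lp_space p Q"
    and "\<forall>j\<ge>1. (\<lambda>k. Lp_norm p Q (\<lambda>x. pos_part (z k x - 1 / real j) - Z j x)) \<longlonglongrightarrow> 0"
  shows "\<exists>w \<in> Lp_space p Q. (\<lambda>k. Lp_norm p Q (\<lambda>x. z k x - w x)) \<longlonglongrightarrow> 0"
proof -
  have fm: "finite_measure (lebesgue_on Q)"
    using assms(1,2) by (simp add: finite_measure_lebesgue_on lmeasurable_open)
  have p: "0 \<le> p" "0 < p" using assms(3) by auto
  define e where "e n = 1 / real (Suc n)" for n
  define u where "u n k x = pos_part (z k x - e n) - Z (Suc n) x" for n k x
  have e_lim: "e \<longlonglongrightarrow> 0" unfolding e_def by (rule LIMSEQ_Suc[OF lim_1_over_n])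
  have u_lim: "(\<lambda>k. Lp_integral p Q (u n k)) \<longlonglongrightarrow> 0" for n
  proof -
    have "(\<lambda>k. Lp_norm p Q (u n k)) \<longlonglongrightarrow> 0"
      using assms(7)[rule_format, of "Suc n"] by (simp add: u_def[abs_def] e_def del: of_nat_Suc)
    then show ?thesis using Lp_norm_tendsto_0_iff[OF p(2)] by blast
  qed
  obtain w where w_Lp: "w \<in> Lp_space p Q"
    and w_close: "\<And>n. AE x in lebesgue_on Q. \<bar>Z (Suc n) x - w x\<bar> \<le> \<bar>e n\<bar>"
    by (rule uniform_limit_of_truncation_limits[OF fm p(1) _ _ e_lim u_lim[unfolded u_def]])
       (use assms(4,6) in auto)
  have "(\<lambda>k. Lp_integral p Q (\<lambda>x. z k x - w x)) \<longlonglongrightarrow> 0"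
  proof (rule Lp_integral_tendsto_0_if_approximable[OF fm p(2) _ _ u_lim _ tendsto_mult_right_zero[OF e_lim]])
    show "(\<lambda>x. z k x - w x) \<in> borel_measurable (lebesgue_on Q)" for k
      using assms(4) w_Lp by (auto intro: borel_measurable_diff Lp_space_measurable)
    show "u n k \<in> Lp_space p Q" for n k
      unfolding u_def[abs_def] using assms(4,6) Lp_space_const[OF fm]
      by (intro Lp_space_diff Lp_space_pos_part p) auto
    show "AE x in lebesgue_on Q. \<bar>z k x - w x\<bar> \<le> \<bar>u n k x\<bar> + 2 * e n" for n k
      using w_close[of n] assms(5)[rule_format, of k]
    proof eventually_elim
      case (elim x)
      then have "\<bar>z k x - pos_part (z k x - e n)\<bar> \<le> e n"
        by (intro abs_sub_pos_part_le) (auto simp: e_def)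
      with elim show ?case by (auto simp: u_def e_def)
    qed
  qed
  then show ?thesis
    using w_Lp Lp_norm_tendsto_0_iff[OF p(2), of Q "\<lambda>k x. z k x - w x"] by blast
qed

end
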